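(* Let $(W,\mathrm d)$ and $(W_h,\mathrm d_h)$ be Hilbert complexes, with morphisms $i_h\colon W_h\to W$ and $\pi_h\colon W\to W_h$ such that $\pi_h^k\circ i_h^k=\mathrm{id}_{W_h^k}$ for each $k$. Suppose that for all $k$, \[\|q-i_h^k\pi_h^kq\|<\|q\|\quad\text{for all } q\in\mathfrak H^k,\ q\neq 0.\] Then the map induced by $\pi_h$ on reduced cohomology, $[z]\mapsto[\pi_hz]$, is an isomorphism $\mathfrak Z^k/\overline{\mathfrak B^k}\to\mathfrak Z_h^k/\overline{\mathfrak B_h^k}$ for each $k$ (and hence so is the map induced by $i_h$, its inverse).
   Context: A Hilbert complex $(W,\mathrm d)$ is a sequence of Hilbert spaces $W^k$ together with closed, densely defined (possibly unbounded) linear maps $\mathrm d^k\colon V^k\subset W^k\to V^{k+1}\subset W^{k+1}$ satisfying $\mathrm d^k\circ\mathrm d^{k-1}=0$. A morphism $f\colon(W,\mathrm d)\to(W',\mathrm d')$ is a sequence of bounded linear maps $f^k\colon W^k\to W'^k$ with $f^kV^k\subset V'^k$ and $\mathrm d'^kf^k=f^{k+1}\mathrm d^k$ on $V^k$. For $(W,\mathrm d)$: $\mathfrak Z^k=\ker\mathrm d^k$, $\mathfrak B^k=\mathrm d^{k-1}V^{k-1}$, the harmonic space is $\mathfrak H^k=\mathfrak Z^k\cap(\mathfrak B^k)^{\perp}$ (orthogonal complement in $W^k$), and the reduced cohomology space is $\mathfrak Z^k/\overline{\mathfrak B^k}$; similarly $\mathfrak Z_h^k,\mathfrak B_h^k$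 for $(W_h,\mathrm d_h)$. Norms $\|\cdot\|$ are those of $W^k$. *)

theory Defs
  imports "HOL-Analysis.Analysis"
begin

text \<open>The (real) Hilbert spaces W k are modelled as
closed linear subspaces of one ambient real Hilbert space 'a (norm and inner product are
those of 'a). V k is the domain of the closed densely defined operator d k.\<close>

definition linear_on_subspace :: "'a::real_vector set \<Rightarrow> ('a \<Rightarrow> 'b::real_vector) \<Rightarrow> bool" where
  "linear_on_subspace S f \<longleftrightarrow> subspace S \<and>
     (\<forall>x\<in>S. \<forall>y\<in>S. f (x + y) = f x + f y) \<and> (\<forall>c. \<forall>x\<in>S. f (c *\<^sub>R x) = c *\<^sub>R f x)"

definition hilbert_complex ::
  "(int \<Rightarrow> 'a::{real_inner,complete_space} set) \<Rightarrow> (int \<Rightarrow> 'a set) \<Rightarrow> (int \<Rightarrow> 'a \<Rightarrow> 'a) \<Rightarrow> bool" where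
  "hilbert_complex W V d \<longleftrightarrow> (\<forall>k.
      subspace (W k) \<and> closed (W k) \<and>
      V k \<subseteq> W k \<and> W k \<subseteq> closure (V k) \<and>
      linear_on_subspace (V k) (d k) \<and>
      d k ` V k \<subseteq> V (k + 1) \<and>
      closed {(x, d k x) | x. x \<in> V k} \<and>
      (\<forall>x\<in>V k. d (k + 1) (d k x) = 0))"

definition hc_morphism ::
  "(int \<Rightarrow> 'a::{real_inner,complete_space} set) \<Rightarrow> (int \<Rightarrow> 'a set) \<Rightarrow> (int \<Rightarrow> 'a \<Rightarrow> 'a) \<Rightarrow>
   (int \<Rightarrow> 'b::{real_inner,complete_space} set) \<Rightarrow> (int \<Rightarrow> 'b set) \<Rightarrow> (int \<Rightarrow> 'b \<Rightarrow> 'b) \<Rightarrow>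
   (int \<Rightarrow> 'a \<Rightarrow> 'b) \<Rightarrow> bool" where
  "hc_morphism W V d W' V' d' f \<longleftrightarrow> (\<forall>k.
      linear_on_subspace (W k) (f k) \<and>
      f k ` W k \<subseteq> W' k \<and>
      (\<exists>C. \<forall>x\<in>W k. norm (f k x) \<le> C * norm x) \<and>
      f k ` V k \<subseteq> V' k \<and>
      (\<forall>x\<in>V k. d' k (f k x) = f (k + 1) (d k x)))"

definition cycles :: "(int \<Rightarrow> 'a set) \<Rightarrow> (int \<Rightarrow> 'a \<Rightarrow> 'a::real_vector) \<Rightarrow> int \<Rightarrow> 'a set" where
  "cycles V d k = {x \<in> V k. d k x = 0}"

definition boundaries :: "(int \<Rightarrow> 'a set) \<Rightarrow> (int \<Rightarrow> 'a \<Rightarrow> 'a::real_vector) \<Rightarrow> int \<Rightarrow> 'a set" where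
  "boundaries V d k = d (k - 1) ` V (k - 1)"

definition harmonic :: "(int \<Rightarrow> 'a set) \<Rightarrow> (int \<Rightarrow> 'a \<Rightarrow> 'a::real_inner) \<Rightarrow> int \<Rightarrow> 'a set" where
  "harmonic V d k = {z \<in> cycles V d k. \<forall>b\<in>boundaries V d k. inner z b = 0}"

text \<open>Reduced cohomology Z^k / closure(B^k), with classes represented as cosets z + closure(B^k).\<close>
definition rclass :: "(int \<Rightarrow> 'a set) \<Rightarrow> (int \<Rightarrow> 'a \<Rightarrow> 'a::real_normed_vector) \<Rightarrow> int \<Rightarrow> 'a \<Rightarrow> 'a set" where
  "rclass V d k z = (\<lambda>b. z + b) ` closure (boundaries V d k)"

definition reduced_cohomology :: "(int \<Rightarrow> 'a set) \<Rightarrow> (int \<Rightarrow> 'a \<Rightarrow> 'a::real_normed_vector) \<Rightarrow> int \<Rightarrow> 'a set set" where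
  "reduced_cohomology V d k = rclass V d k ` cycles V d k"

definition induced_map ::
  "(int \<Rightarrow> 'b set) \<Rightarrow> (int \<Rightarrow> 'b \<Rightarrow> 'b::real_normed_vector) \<Rightarrow> (int \<Rightarrow> 'a \<Rightarrow> 'b) \<Rightarrow> int \<Rightarrow> 'a set \<Rightarrow> 'b set" where
  "induced_map V' d' f k C = rclass V' d' k (f k (SOME z. z \<in> C))"

end

theory Submission
  imports Defs "HOL-Analysis.Analysis"
begin

text \<open>By the Hodge decomposition every cycle is a harmonic form plus a limit of boundaries, and
  morphisms preserve closures of boundaries, so it suffices to show that a harmonic \<open>q\<close> with
  \<open>\<pi>\<^sub>h q\<close> in the closure of the discrete boundaries vanishes. Then \<open>i\<^sub>h \<pi>\<^sub>h q\<close> lies in the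
  closure of the boundaries, which is orthogonal to \<open>q\<close>; Pythagoras gives
  \<open>\<parallel>q - i\<^sub>h \<pi>\<^sub>h q\<parallel> \<ge> \<parallel>q\<parallel>\<close>, so the hypothesis forces \<open>q = 0\<close>. This makes \<open>[z] \<mapsto> [i\<^sub>h \<pi>\<^sub>h z]\<close> the
  identity on reduced cohomology, while \<open>\<pi>\<^sub>h i\<^sub>h = id\<close> gives the other composite.\<close>

lemma subspace_closure:
  fixes S :: "'a::real_normed_vector set"
  assumes "subspace S"
  shows "subspace (closure S)"
  unfolding subspace_def
proof (intro conjI ballI allI)
  show "0 \<in> closure S"
    using assms closure_subset subspace_0 by blast
next
  fix x y assume "x \<in> closure S" "y \<in> closure S"
  then obtain f g where "\<And>n. f n \<in> S" "f \<longlonglongrightarrow> x" "\<And>n. g n \<in> S" "g \<longlonglongrightarrow> y"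
    unfolding closure_sequential by blast
  then show "x + y \<in> closure S"
    unfolding closure_sequential
    by (intro exI[of _ "\<lambda>n. f n + g n"]) (auto intro: tendsto_add subspace_add[OF assms])
next
  fix c x assume "x \<in> closure S"
  then obtain f where "\<And>n. f n \<in> S" "f \<longlonglongrightarrow> x"
    unfolding closure_sequential by blast
  then show "c *\<^sub>R x \<in> closure S"
    unfolding closure_sequential
    by (intro exI[of _ "\<lambda>n. c *\<^sub>R f n"]) (auto intro: tendsto_scaleR subspace_scale[OF assms])
qed

lemma parallelogram_law:
  fixes a b :: "'a::real_inner"
  shows "(norm (a - b))\<^sup>2 + (norm (a + b))\<^sup>2 = 2 * (norm a)\<^sup>2 + 2 * (norm b)\<^sup>2"
  by (simp add: power2_norm_eq_inner inner_diff inner_add inner_commute algebra_simps)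

text \<open>Without local compactness the nearest point is obtained as the limit of a minimising
  sequence, which is Cauchy by the parallelogram law since midpoints stay in the convex set.\<close>

lemma nearest_point_exists_complete:
  fixes S :: "'a::{real_inner,complete_space} set"
  assumes "convex S" "closed S" "S \<noteq> {}"
  shows "\<exists>p\<in>S. \<forall>y\<in>S. dist a p \<le> dist a y"
proof -
  define \<delta> where "\<delta> = infdist a S"
  have \<delta>_le: "\<delta> \<le> dist a y" if "y \<in> S" for y
    unfolding \<delta>_def using that by (rule infdist_le)
  have "\<exists>s\<in>S. dist a s < \<delta> + 1 / (real n + 1)" for n
  proof -
    have "(INF y\<in>S. dist a y) < \<delta> + 1 / (real n + 1)"
      using assms(3) by (simp add: \<delta>_def infdist_notempty add_pos_pos)
    then show ?thesis
      using cInf_lessD[of "(\<lambda>y. dist a y) ` S"] assms(3) by auto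
  qed
  then obtain s where s: "\<And>n. s n \<in> S" and s_close: "\<And>n. dist a (s n) < \<delta> + 1 / (real n + 1)"
    by metis
  have "(\<lambda>n. dist a (s n)) \<longlonglongrightarrow> \<delta>"
  proof (rule tendsto_sandwich)
    show "\<forall>\<^sub>F n in sequentially. \<delta> \<le> dist a (s n)"
      using \<delta>_le s by simp
    show "\<forall>\<^sub>F n in sequentially. dist a (s n) \<le> \<delta> + 1 / (real n + 1)"
      using s_close by (simp add: less_imp_le)
    show "(\<lambda>n. \<delta> + 1 / (real n + 1)) \<longlonglongrightarrow> \<delta>"
      using LIMSEQ_inverse_real_of_nat_add[of \<delta>] by (simp add: inverse_eq_divide add.commute)
  qed simp
  then have dist_sq_lim: "(\<lambda>n. (dist a (s n))\<^sup>2) \<longlonglongrightarrow> \<delta>\<^sup>2"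
    by (intro tendsto_intros)
  have dist_sq_bound: "(norm (s m - s n))\<^sup>2 \<le> 2 * (dist a (s m))\<^sup>2 + 2 * (dist a (s n))\<^sup>2 - 4 * \<delta>\<^sup>2"
    for m n
  proof -
    have "midpoint (s m) (s n) \<in> S"
      using convexD[OF assms(1) s s, of "1/2" "1/2"] by (simp add: midpoint_def scaleR_right_distrib)
    then have "\<delta>\<^sup>2 \<le> (norm (a - midpoint (s m) (s n)))\<^sup>2"
      using \<delta>_le[of "midpoint (s m) (s n)"] infdist_nonneg[of a S]
      by (simp add: \<delta>_def dist_norm power_mono)
    moreover have mid: "(a - s m) + (a - s n) = 2 *\<^sub>R (a - midpoint (s m) (s n))"
      by (simp add: midpoint_def algebra_simps scaleR_2)
    moreover have "(norm (s m - s n))\<^sup>2 + 4 * (norm (a - midpoint (s m) (s n)))\<^sup>2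
        = 2 * (dist a (s m))\<^sup>2 + 2 * (dist a (s n))\<^sup>2"
      using parallelogram_law[of "a - s m" "a - s n"] mid
      by (simp add: dist_norm norm_minus_commute power_mult_distrib)
    ultimately show ?thesis by linarith
  qed
  have "Cauchy s"
  proof (rule metric_CauchyI)
    fix e :: real assume "e > 0"
    then have "\<forall>\<^sub>F n in sequentially. (dist a (s n))\<^sup>2 < \<delta>\<^sup>2 + e\<^sup>2 / 4"
      using dist_sq_lim \<open>e > 0\<close> by (intro order_tendstoD) auto
    then obtain N where N: "\<And>n. n \<ge> N \<Longrightarrow> (dist a (s n))\<^sup>2 < \<delta>\<^sup>2 + e\<^sup>2 / 4"
      unfolding eventually_sequentially by blast
    have "dist (s m) (s n) < e" if "m \<ge> N" "n \<ge> N" for m n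
    proof -
      have "(norm (s m - s n))\<^sup>2 < e\<^sup>2"
        using dist_sq_bound[of m n] N[OF that(1)] N[OF that(2)] by linarith
      then show ?thesis
        using \<open>e > 0\<close> by (simp add: dist_norm power_less_imp_less_base)
    qed
    then show "\<exists>N. \<forall>m\<ge>N. \<forall>n\<ge>N. dist (s m) (s n) < e"
      by blast
  qed
  then obtain p where "s \<longlonglongrightarrow> p"
    using convergent_eq_Cauchy by blast
  have "p \<in> S"
    using closed_sequentially[OF assms(2) _ \<open>s \<longlonglongrightarrow> p\<close>] s by blast
  moreover have "dist a p = \<delta>"
    using LIMSEQ_unique[OF tendsto_dist[OF tendsto_const \<open>s \<longlonglongrightarrow> p\<close>]]
      \<open>(\<lambda>n. dist a (s n)) \<longlonglongrightarrow> \<delta>\<close> by blast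
  ultimately show ?thesis
    using \<delta>_le by auto
qed

lemma orthogonal_decomposition_closed_subspace:
  fixes S :: "'a::{real_inner,complete_space} set"
  assumes "subspace S" "closed S"
  shows "\<exists>p\<in>S. \<forall>y\<in>S. inner (x - p) y = 0"
proof -
  obtain p where p: "p \<in> S" and nearest: "\<forall>y\<in>S. dist x p \<le> dist x y"
    using nearest_point_exists_complete[OF subspace_imp_convex[OF assms(1)] assms(2)]
      subspace_0[OF assms(1)] by blast
  have "inner (x - p) y = 0" if "y \<in> S" for y
  proof -
    have "p + y \<in> S" "p - y \<in> S"
      using assms(1) p that by (simp_all add: subspace_add subspace_diff)
    then have "inner (x - p) y \<le> 0" "inner (x - p) (- y) \<le> 0"
      using any_closest_point_dot[OF subspace_imp_convex[OF assms(1)] assms(2) p _ nearest]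
      by fastforce+
    then show ?thesis by simp
  qed
  with p show ?thesis by blast
qed

lemma linear_on_subspace_diff:
  assumes "linear_on_subspace S f" "x \<in> S" "y \<in> S"
  shows "f (x - y) = f x - f y"
proof -
  have "(-1) *\<^sub>R y \<in> S"
    using assms subspace_scale unfolding linear_on_subspace_def by blast
  then have "f (x + (-1) *\<^sub>R y) = f x + (-1) *\<^sub>R f y"
    using assms unfolding linear_on_subspace_def by metis
  then show ?thesis by simp
qed

lemma linear_on_subspace_0:
  assumes "linear_on_subspace S f"
  shows "f 0 = 0"
  using linear_on_subspace_diff[OF assms, of 0 0] assms subspace_0
  unfolding linear_on_subspace_def by fastforce

lemma hilbert_complexD:
  assumes "hilbert_complex W V d"
  shows "V k \<subseteq> W k" "linear_on_subspace (V k) (d k)"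
    "d k ` V k \<subseteq> V (k + 1)" "closed {(x, d k x) | x. x \<in> V k}"
    "\<And>x. x \<in> V k \<Longrightarrow> d (k + 1) (d k x) = 0"
  using assms unfolding hilbert_complex_def by blast+

lemma hc_morphismD:
  assumes "hc_morphism W V d W' V' d' f"
  shows "linear_on_subspace (W k) (f k)" "f k ` V k \<subseteq> V' k"
    "\<And>x. x \<in> V k \<Longrightarrow> d' k (f k x) = f (k + 1) (d k x)"
  using assms unfolding hc_morphism_def by blast+

lemma hc_morphism_continuous_on:
  assumes "hc_morphism W V d W' V' d' f"
  shows "continuous_on (W k) (f k)"
proof -
  obtain C where C: "\<forall>x\<in>W k. norm (f k x) \<le> C * norm x"
    using assms unfolding hc_morphism_def by blast
  have lin: "linear_on_subspace (W k) (f k)"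
    using hc_morphismD(1)[OF assms] .
  have "(max C 0)-lipschitz_on (W k) (f k)"
  proof (rule lipschitz_onI)
    fix x y assume "x \<in> W k" "y \<in> W k"
    moreover from this have "x - y \<in> W k"
      using lin subspace_diff unfolding linear_on_subspace_def by blast
    ultimately have "norm (f k x - f k y) \<le> C * norm (x - y)"
      using C linear_on_subspace_diff[OF lin] by metis
    also have "\<dots> \<le> max C 0 * norm (x - y)"
      by (simp add: mult_right_mono)
    finally show "dist (f k x) (f k y) \<le> max C 0 * dist x y"
      by (simp add: dist_norm)
  qed simp
  then show ?thesis
    by (rule lipschitz_on_continuous_on)
qed

context
  fixes W V :: "int \<Rightarrow> 'a::{real_inner,complete_space} set" and d :: "int \<Rightarrow> 'a \<Rightarrow> 'a"
  assumes complex: "hilbert_complex W V d"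
begin

lemma closed_cycles: "closed (cycles V d k)"
proof -
  have "closed ((\<lambda>x. (x, 0)) -` {(x, d k x) | x. x \<in> V k})"
    by (rule continuous_closed_vimage[OF hilbert_complexD(4)[OF complex]]) (intro continuous_intros)
  moreover have "cycles V d k = (\<lambda>x. (x, 0)) -` {(x, d k x) | x. x \<in> V k}"
    unfolding cycles_def by auto
  ultimately show ?thesis by simp
qed

lemma subspace_cycles: "subspace (cycles V d k)"
  using hilbert_complexD(2)[OF complex] linear_on_subspace_0[OF hilbert_complexD(2)[OF complex]]
  unfolding subspace_def cycles_def linear_on_subspace_def by auto

lemma cycles_subset: "cycles V d k \<subseteq> W k"
  using hilbert_complexD(1)[OF complex] unfolding cycles_def by blast

lemma subspace_boundaries: "subspace (boundaries V d k)"
proof -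
  have lin: "linear_on_subspace (V (k - 1)) (d (k - 1))"
    by (rule hilbert_complexD(2)[OF complex])
  then have V: "subspace (V (k - 1))"
    by (simp add: linear_on_subspace_def)
  show ?thesis
    unfolding subspace_def boundaries_def
  proof (intro conjI ballI allI)
    show "0 \<in> d (k - 1) ` V (k - 1)"
      using linear_on_subspace_0[OF lin] subspace_0[OF V] by force
  next
    fix x y assume "x \<in> d (k - 1) ` V (k - 1)" "y \<in> d (k - 1) ` V (k - 1)"
    then obtain u v where "u \<in> V (k - 1)" "v \<in> V (k - 1)" "x = d (k - 1) u" "y = d (k - 1) v"
      by blast
    then show "x + y \<in> d (k - 1) ` V (k - 1)"
      using lin subspace_add[OF V] unfolding linear_on_subspace_def
      by (auto intro!: image_eqI[of _ _ "u + v"])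
  next
    fix c x assume "x \<in> d (k - 1) ` V (k - 1)"
    then obtain u where "u \<in> V (k - 1)" "x = d (k - 1) u"
      by blast
    then show "c *\<^sub>R x \<in> d (k - 1) ` V (k - 1)"
      using lin subspace_scale[OF V] unfolding linear_on_subspace_def
      by (auto intro!: image_eqI[of _ _ "c *\<^sub>R u"])
  qed
qed

lemma boundaries_subset_cycles: "boundaries V d k \<subseteq> cycles V d k"
  using hilbert_complexD(3,5)[OF complex, where k="k - 1"] unfolding boundaries_def cycles_def by auto

lemma closure_boundaries_subset_cycles: "closure (boundaries V d k) \<subseteq> cycles V d k"
  using closure_minimal[OF boundaries_subset_cycles closed_cycles] .

lemma subspace_closure_boundaries: "subspace (closure (boundaries V d k))"
  using subspace_closure[OF subspace_boundaries] .

lemma closure_boundaries_subset: "closure (boundaries V d k) \<subseteq> W k"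
  using closure_boundaries_subset_cycles cycles_subset by blast

lemma rclass_eqI:
  assumes "z - z' \<in> closure (boundaries V d k)"
  shows "rclass V d k z = rclass V d k z'"
  unfolding rclass_def
proof (intro equalityI image_subsetI)
  fix b assume "b \<in> closure (boundaries V d k)"
  then have "(z - z') + b \<in> closure (boundaries V d k)" "b - (z - z') \<in> closure (boundaries V d k)"
    using assms subspace_add subspace_diff subspace_closure_boundaries by blast+
  then show "z + b \<in> (+) z' ` closure (boundaries V d k)" "z' + b \<in> (+) z ` closure (boundaries V d k)"
    by (force intro: image_eqI[of _ _ "z - z' + b"], force intro: image_eqI[of _ _ "b - (z - z')"])
qed

lemma harmonic_orthogonal_closure_boundaries:
  assumes "q \<in> harmonic V d k" "b \<in> closure (boundaries V d k)"
  shows "inner q b = 0"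
proof -
  have "closure (boundaries V d k) \<subseteq> {b. inner q b = 0}"
    using assms(1) by (intro closure_minimal) (auto simp: harmonic_def closed_hyperplane)
  then show ?thesis
    using assms(2) by blast
qed

lemma cycle_decomposition_harmonic:
  assumes "z \<in> cycles V d k"
  obtains b where "b \<in> closure (boundaries V d k)" "z - b \<in> harmonic V d k"
proof -
  obtain b where b: "b \<in> closure (boundaries V d k)"
    and orth: "\<forall>y\<in>closure (boundaries V d k). inner (z - b) y = 0"
    using orthogonal_decomposition_closed_subspace[OF subspace_closure_boundaries] by blast
  have "z - b \<in> cycles V d k"
    using subspace_diff[OF subspace_cycles assms] b closure_boundaries_subset_cycles by blast
  with orth have "z - b \<in> harmonic V d k"
    unfolding harmonic_def using closure_subset by blast
  with b that show ?thesis by blast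
qed

end

lemma hc_morphism_cycles:
  assumes "hc_morphism W V d W' V' d' f" "z \<in> cycles V d k"
  shows "f k z \<in> cycles V' d' k"
  using assms(2) hc_morphismD(2,3)[OF assms(1), where k=k]
    linear_on_subspace_0[OF hc_morphismD(1)[OF assms(1)]]
  unfolding cycles_def by auto

lemma hc_morphism_closure_boundaries:
  assumes "hilbert_complex W V d" "hc_morphism W V d W' V' d' f" "b \<in> closure (boundaries V d k)"
  shows "f k b \<in> closure (boundaries V' d' k)"
proof -
  have "f k ` boundaries V d k \<subseteq> boundaries V' d' k"
    using hc_morphismD(2,3)[OF assms(2), where k="k - 1"] unfolding boundaries_def by force
  then have "f k ` closure (boundaries V d k) \<subseteq> closure (boundaries V' d' k)"
    using continuous_on_subset[OF hc_morphism_continuous_on[OF assms(2)]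
        closure_boundaries_subset[OF assms(1)]]
    by (intro image_closure_subset) (auto intro: closure_subset[THEN subsetD])
  with assms(3) show ?thesis by blast
qed

lemma hc_morphism_respects_closure_boundaries:
  assumes "hilbert_complex W V d" "hc_morphism W V d W' V' d' f"
    "z \<in> cycles V d k" "z' \<in> cycles V d k" "z - z' \<in> closure (boundaries V d k)"
  shows "f k z - f k z' \<in> closure (boundaries V' d' k)"
  using hc_morphism_closure_boundaries[OF assms(1,2,5)] assms(3,4) cycles_subset[OF assms(1)]
    linear_on_subspace_diff[OF hc_morphismD(1)[OF assms(2)]] by (metis subsetD)

lemma induced_map_rclass:
  assumes "hilbert_complex W V d" "hilbert_complex W' V' d'" "hc_morphism W V d W' V' d' f"
    "z \<in> cycles V d k"
  shows "induced_map V' d' f k (rclass V d k z) = rclass V' d' k (f k z)"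
proof -
  have "z \<in> rclass V d k z"
    using subspace_0[OF subspace_closure_boundaries[OF assms(1)]]
    unfolding rclass_def by (auto intro: image_eqI[of _ _ 0])
  then have "(SOME w. w \<in> rclass V d k z) \<in> rclass V d k z"
    by (rule someI)
  then obtain b where b: "b \<in> closure (boundaries V d k)"
    and some: "(SOME w. w \<in> rclass V d k z) = z + b"
    unfolding rclass_def by blast
  have "z + b \<in> cycles V d k"
    using subspace_add[OF subspace_cycles[OF assms(1)] assms(4)] b
      closure_boundaries_subset_cycles[OF assms(1)] by blast
  then have "f k (z + b) - f k z \<in> closure (boundaries V' d' k)"
    using hc_morphism_respects_closure_boundaries[OF assms(1,3) _ assms(4)] b by simp
  then show ?thesis
    unfolding induced_map_def some by (rule rclass_eqI[OF assms(2)])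
qed

lemma induced_map_reduced_cohomology:
  assumes "hilbert_complex W V d" "hilbert_complex W' V' d'" "hc_morphism W V d W' V' d' f"
    "C \<in> reduced_cohomology V d k"
  shows "induced_map V' d' f k C \<in> reduced_cohomology V' d' k"
  using assms(4) induced_map_rclass[OF assms(1-3)] hc_morphism_cycles[OF assms(3)]
  unfolding reduced_cohomology_def by auto

lemma induced_map_left_inverse:
  assumes "hilbert_complex W V d" "hilbert_complex W' V' d'"
    "hc_morphism W V d W' V' d' f" "hc_morphism W' V' d' W V d g"
    "\<And>x. x \<in> W' k \<Longrightarrow> f k (g k x) = x" "C \<in> reduced_cohomology V' d' k"
  shows "induced_map V' d' f k (induced_map V d g k C) = C"
proof -
  obtain z where z: "z \<in> cycles V' d' k" and C: "C = rclass V' d' k z"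
    using assms(6) unfolding reduced_cohomology_def by blast
  have "f k (g k z) = z"
    using assms(5) cycles_subset[OF assms(2)] z by blast
  then show ?thesis
    unfolding C induced_map_rclass[OF assms(2,1,4) z]
      induced_map_rclass[OF assms(1,2,3) hc_morphism_cycles[OF assms(4) z]] by simp
qed

lemma hc_morphism_reflects_closure_boundaries:
  assumes "hilbert_complex W V d" "hilbert_complex W' V' d'"
    "hc_morphism W V d W' V' d' f" "hc_morphism W' V' d' W V d g"
    and gap: "\<And>q. q \<in> harmonic V d k \<Longrightarrow> q \<noteq> 0 \<Longrightarrow> norm (q - g k (f k q)) < norm q"
    and z: "z \<in> cycles V d k" "f k z \<in> closure (boundaries V' d' k)"
  shows "z \<in> closure (boundaries V d k)"
proof -
  obtain b where b: "b \<in> closure (boundaries V d k)" and harm: "z - b \<in> harmonic V d k"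
    using cycle_decomposition_harmonic[OF assms(1) z(1)] by blast
  define q where "q = z - b"
  have "f k b \<in> closure (boundaries V' d' k)"
    using hc_morphism_closure_boundaries[OF assms(1,3) b] .
  then have "f k z - f k b \<in> closure (boundaries V' d' k)"
    using subspace_diff[OF subspace_closure_boundaries[OF assms(2)] z(2)] by blast
  moreover have "f k q = f k z - f k b"
    unfolding q_def using linear_on_subspace_diff[OF hc_morphismD(1)[OF assms(3)]] z(1) b
      cycles_subset[OF assms(1)] closure_boundaries_subset[OF assms(1)] by blast
  ultimately have "g k (f k q) \<in> closure (boundaries V d k)"
    using hc_morphism_closure_boundaries[OF assms(2,4)] by simp
  then have "inner q (g k (f k q)) = 0"
    using harmonic_orthogonal_closure_boundaries[OF assms(1) harm] by (simp add: q_def)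
  then have "(norm (q - g k (f k q)))\<^sup>2 = (norm q)\<^sup>2 + (norm (g k (f k q)))\<^sup>2"
    by (simp add: power2_norm_eq_inner inner_diff inner_commute)
  then have "norm q \<le> norm (q - g k (f k q))"
    by (simp add: power2_le_imp_le)
  then have "q = 0"
    using gap harm unfolding q_def by fastforce
  with b show ?thesis by (simp add: q_def)
qed

lemma induced_map_right_inverse:
  assumes "hilbert_complex W V d" "hilbert_complex W' V' d'"
    "hc_morphism W V d W' V' d' f" "hc_morphism W' V' d' W V d g"
    "\<And>x. x \<in> W' k \<Longrightarrow> f k (g k x) = x"
    "\<And>q. q \<in> harmonic V d k \<Longrightarrow> q \<noteq> 0 \<Longrightarrow> norm (q - g k (f k q)) < norm q"
    "C \<in> reduced_cohomology V d k"
  shows "induced_map V d g k (induced_map V' d' f k C) = C"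
proof -
  obtain z where z: "z \<in> cycles V d k" and C: "C = rclass V d k z"
    using assms(7) unfolding reduced_cohomology_def by blast
  have fz: "f k z \<in> cycles V' d' k"
    using hc_morphism_cycles[OF assms(3) z] .
  have gfz: "g k (f k z) \<in> cycles V d k"
    using hc_morphism_cycles[OF assms(4) fz] .
  have "f k (g k (f k z) - z) = f k (g k (f k z)) - f k z"
    using linear_on_subspace_diff[OF hc_morphismD(1)[OF assms(3)]] gfz z cycles_subset[OF assms(1)]
    by blast
  also have "\<dots> = 0"
    using assms(5) fz cycles_subset[OF assms(2)] by auto
  finally have "f k (g k (f k z) - z) \<in> closure (boundaries V' d' k)"
    using subspace_0[OF subspace_closure_boundaries[OF assms(2)]] by simp
  then have "g k (f k z) - z \<in> closure (boundaries V d k)"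
    using hc_morphism_reflects_closure_boundaries[OF assms(1-4,6)]
      subspace_diff[OF subspace_cycles[OF assms(1)] gfz z] by blast
  then show ?thesis
    unfolding C induced_map_rclass[OF assms(1,2,3) z] induced_map_rclass[OF assms(2,1,4) fz]
    by (rule rclass_eqI[OF assms(1)])
qed

theorem mainTheorem3:
  fixes W V :: "int \<Rightarrow> 'a::{real_inner,complete_space} set" and d :: "int \<Rightarrow> 'a \<Rightarrow> 'a"
    and Wh Vh :: "int \<Rightarrow> 'b::{real_inner,complete_space} set" and dh :: "int \<Rightarrow> 'b \<Rightarrow> 'b"
    and ih :: "int \<Rightarrow> 'b \<Rightarrow> 'a" and \<pi>h :: "int \<Rightarrow> 'a \<Rightarrow> 'b"
  assumes "hilbert_complex W V d"
    and "hilbert_complex Wh Vh dh"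
    and "hc_morphism Wh Vh dh W V d ih"
    and "hc_morphism W V d Wh Vh dh \<pi>h"
    and "\<And>k x. x \<in> Wh k \<Longrightarrow> \<pi>h k (ih k x) = x"
    and "\<And>k q. q \<in> harmonic V d k \<Longrightarrow> q \<noteq> 0 \<Longrightarrow> norm (q - ih k (\<pi>h k q)) < norm q"
  shows "\<forall>k.
     (\<forall>z\<in>cycles V d k. \<forall>z'\<in>cycles V d k. z - z' \<in> closure (boundaries V d k) \<longrightarrow>
         \<pi>h k z - \<pi>h k z' \<in> closure (boundaries Vh dh k)) \<and>
     bij_betw (induced_map Vh dh \<pi>h k) (reduced_cohomology V d k) (reduced_cohomology Vh dh k) \<and>
     (\<forall>C\<in>reduced_cohomology V d k. induced_map V d ih k (induced_map Vh dh \<pi>h k C) = C) \<and>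
     (\<forall>C\<in>reduced_cohomology Vh dh k. induced_map Vh dh \<pi>h k (induced_map V d ih k C) = C)"
proof (intro allI conjI ballI impI)
  fix k
  show right_inverse: "induced_map V d ih k (induced_map Vh dh \<pi>h k C) = C"
    if "C \<in> reduced_cohomology V d k" for C
    using induced_map_right_inverse[OF assms(1,2,4,3)] assms(5,6) that by blast
  show left_inverse: "induced_map Vh dh \<pi>h k (induced_map V d ih k C) = C"
    if "C \<in> reduced_cohomology Vh dh k" for C
    using induced_map_left_inverse[OF assms(1,2,4,3)] assms(5) that by blast
  show "\<pi>h k z - \<pi>h k z' \<in> closure (boundaries Vh dh k)"
    if "z \<in> cycles V d k" "z' \<in> cycles V d k" "z - z' \<in> closure (boundaries V d k)" for z z'
    using hc_morphism_respects_closure_boundaries[OF assms(1,4) that] .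
  show "bij_betw (induced_map Vh dh \<pi>h k) (reduced_cohomology V d k) (reduced_cohomology Vh dh k)"
    using induced_map_reduced_cohomology[OF assms(1,2,4)] induced_map_reduced_cohomology[OF assms(2,1,3)]
      right_inverse left_inverse by (intro bij_betwI) auto
qed

end
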